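(* Let $t\geq 4$ be an integer and let $H$ be a $3$-graph on $t$ vertices with at least $\binom{t-1}{3}+\binom{t-2}{2}+2$ edges. Then $H$ is not $\lambda$-perfect.
   Context: For a $3$-graph $G$ on vertex set $[n]$ and $\vec x\in\Delta=\{\vec x\in[0,1]^n:\sum_i x_i=1\}$, put $\lambda(G,\vec x)=\sum_{e\in E(G)}\prod_{i\in e}x_i$ and $\lambda(G)=\max_{\vec x\in\Delta}\lambda(G,\vec x)$ (the Lagrangian). $G$ is $F$-free if it contains no subgraph isomorphic to $F$. The Lagrangian density is $\pi_\lambda(F)=\sup\{3!\,\lambda(G): G\text{ is an }F\text{-free }3\text{-graph}\}$. $K_m^3$ is the complete $3$-graph on $m$ vertices. A $3$-graph $H$ on $t$ vertices is $\lambda$-perfect if $\pi_\lambda(H)=3!\,\lambda(K_{t-1}^3)$. *)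

theory Defs
  imports Complex_Main
begin

definition is_3graph :: "nat \<Rightarrow> nat set set \<Rightarrow> bool" where
  "is_3graph n E \<longleftrightarrow> (\<forall>e\<in>E. e \<subseteq> {..<n} \<and> card e = 3)"

text \<open>The standard simplex Delta in R^n; vectors are functions nat => real, only the
coordinates i < n are relevant.\<close>
definition simplex :: "nat \<Rightarrow> (nat \<Rightarrow> real) set" where
  "simplex n = {x. (\<forall>i<n. 0 \<le> x i \<and> x i \<le> 1) \<and> (\<Sum>i<n. x i) = 1}"

definition lag_poly :: "nat set set \<Rightarrow> (nat \<Rightarrow> real) \<Rightarrow> real" where
  "lag_poly E x = (\<Sum>e\<in>E. \<Prod>i\<in>e. x i)"

text \<open>Lagrangian: maximum of lag_poly over the simplex (the maximum exists by compactness,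
so it equals the supremum).\<close>
definition lagrangian :: "nat \<Rightarrow> nat set set \<Rightarrow> real" where
  "lagrangian n E = Sup (lag_poly E ` simplex n)"

definition contains_copy :: "nat \<Rightarrow> nat set set \<Rightarrow> nat \<Rightarrow> nat set set \<Rightarrow> bool" where
  "contains_copy n E t F \<longleftrightarrow>
     (\<exists>f. inj_on f {..<t} \<and> f ` {..<t} \<subseteq> {..<n} \<and> (\<forall>e\<in>F. f ` e \<in> E))"

text \<open>Lagrangian density: supremum of 3! * lambda(G) over all F-free 3-graphs G
(on a nonempty vertex set, so that the simplex is nonempty).\<close>
definition lagrangian_density :: "nat \<Rightarrow> nat set set \<Rightarrow> real" where
  "lagrangian_density t F =
     Sup {6 * lagrangian n E | n E. 1 \<le> n \<and> is_3graph n E \<and> \<not> contains_copy n E t F}"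

definition complete3 :: "nat \<Rightarrow> nat set set" where
  "complete3 m = {e. e \<subseteq> {..<m} \<and> card e = 3}"

definition lambda_perfect :: "nat \<Rightarrow> nat set set \<Rightarrow> bool" where
  "lambda_perfect t H \<longleftrightarrow> lagrangian_density t H = 6 * lagrangian (t - 1) (complete3 (t - 1))"

end

theory Submission
  imports Defs
begin

text \<open>Let n = t - 1 and m = n - 1. Add to \<open>K\<^sub>n\<^sup>3\<close> on {0..<n} a new vertex n whose link
  is the set of all pairs in {0..<m}, so that n is a twin of m, together with the single edge
  {0, m, n} joining the twins. This 3-graph has C(n,3) + C(m,2) + 1 < |H| edges, hence is H-free.
  Weighting the vertices below m by 1/n and splitting the weight 1/n of m equally between the
  twins reproduces, on the edges other than {0, m, n}, the value C(n,3)/n^3 of the uniform weighting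
  of \<open>K\<^sub>n\<^sup>3\<close>, and the twin edge adds 1/(4n^3). On the other hand
  \<open>\<lambda>(K\<^sub>n\<^sup>3)\<close> \<le> C(n,3)/n^3: writing \<open>6 e\<^sub>3\<close> through power sums, this is the
  tangent-line trick for \<open>2y\<^sup>3 - 3y\<^sup>2\<close> at y = 1/n when n \<ge> 4, and AM-GM when n = 3.\<close>

text \<open>\<open>lag_poly (complete_graph k m) x\<close> is the elementary symmetric polynomial
  \<open>e\<^sub>k(x\<^sub>0, \<dots>, x\<^sub>m\<^sub>-\<^sub>1)\<close>.\<close>

definition complete_graph :: "nat \<Rightarrow> nat \<Rightarrow> nat set set" where
  "complete_graph k m = {e. e \<subseteq> {..<m} \<and> card e = k}"

lemma complete3_eq_complete_graph: "complete3 = complete_graph 3"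
  by (simp add: fun_eq_iff complete3_def complete_graph_def)

lemma finite_complete_graph: "finite (complete_graph k m)"
  unfolding complete_graph_def by (rule finite_subset[of _ "Pow {..<m}"]) auto

lemma card_complete_graph: "card (complete_graph k m) = m choose k"
  unfolding complete_graph_def using n_subsets[of "{..<m}" k] by simp

lemma complete_graph_0: "complete_graph 0 m = {{}}"
  unfolding complete_graph_def by (auto dest: finite_subset[OF _ finite_lessThan])

lemma complete_graph_Suc:
  "complete_graph (Suc k) (Suc m) = complete_graph (Suc k) m \<union> insert m ` complete_graph k m"
proof (intro equalityI subsetI)
  fix e assume e: "e \<in> complete_graph (Suc k) (Suc m)"
  then have fin: "finite e" unfolding complete_graph_def by (auto intro: finite_subset)
  show "e \<in> complete_graph (Suc k) m \<union> insert m ` complete_graph k m"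
  proof (cases "m \<in> e")
    case True
    then have "e - {m} \<in> complete_graph k m" "e = insert m (e - {m})"
      using e fin unfolding complete_graph_def by (auto simp: less_Suc_eq)
    then show ?thesis by blast
  next
    case False
    then show ?thesis using e unfolding complete_graph_def by (auto simp: less_Suc_eq)
  qed
next
  fix e assume "e \<in> complete_graph (Suc k) m \<union> insert m ` complete_graph k m"
  then show "e \<in> complete_graph (Suc k) (Suc m)"
    unfolding complete_graph_def
    by (auto simp: card_insert_if finite_subset[OF _ finite_lessThan])
qed

lemma lag_poly_Un:
  assumes "finite A" "finite B" "A \<inter> B = {}"
  shows "lag_poly (A \<union> B) x = lag_poly A x + lag_poly B x"
  unfolding lag_poly_def using assms by (rule sum.union_disjoint)

lemma lag_poly_insert_image:
  assumes "m \<le> v"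
  shows "lag_poly (insert v ` complete_graph k m) x = x v * lag_poly (complete_graph k m) x"
proof -
  have fresh: "v \<notin> e" "finite e" if "e \<in> complete_graph k m" for e
    using that assms unfolding complete_graph_def by (auto intro: finite_subset)
  have "inj_on (insert v) (complete_graph k m)"
    by (rule inj_onI) (metis Diff_insert_absorb fresh(1))
  then have "lag_poly (insert v ` complete_graph k m) x
      = (\<Sum>e\<in>complete_graph k m. \<Prod>i\<in>insert v e. x i)"
    unfolding lag_poly_def by (simp add: sum.reindex)
  also have "\<dots> = (\<Sum>e\<in>complete_graph k m. x v * (\<Prod>i\<in>e. x i))"
    by (rule sum.cong) (simp_all add: fresh)
  finally show ?thesis by (simp add: lag_poly_def sum_distrib_left)
qed

lemma lag_poly_complete_graph_Suc:
  "lag_poly (complete_graph (Suc k) (Suc m)) x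
     = lag_poly (complete_graph (Suc k) m) x + x m * lag_poly (complete_graph k m) x"
proof -
  have "complete_graph (Suc k) m \<inter> insert m ` complete_graph k m = {}"
    unfolding complete_graph_def by auto
  then show ?thesis
    unfolding complete_graph_Suc
    by (simp add: lag_poly_Un finite_complete_graph lag_poly_insert_image)
qed

lemma lag_poly_complete_graph_const:
  assumes "\<And>i. i < m \<Longrightarrow> x i = c"
  shows "lag_poly (complete_graph k m) x = real (m choose k) * c ^ k"
proof -
  have "(\<Prod>i\<in>e. x i) = c ^ k" if e: "e \<in> complete_graph k m" for e
  proof -
    have "(\<Prod>i\<in>e. x i) = (\<Prod>i\<in>e. c)"
      using e assms unfolding complete_graph_def by (intro prod.cong) auto
    then show ?thesis using e unfolding complete_graph_def by simp
  qed
  then show ?thesis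
    unfolding lag_poly_def by (simp add: card_complete_graph)
qed

lemma lag_poly_complete_graph_1: "lag_poly (complete_graph 1 m) x = (\<Sum>i<m. x i)"
proof (induction m)
  case 0
  then show ?case by (simp add: lag_poly_def complete_graph_def)
next
  case (Suc m)
  then show ?case
    using lag_poly_complete_graph_Suc[where k = 0] by (simp add: complete_graph_0 lag_poly_def)
qed

lemma lag_poly_complete_graph_2:
  "2 * lag_poly (complete_graph 2 m) x = (\<Sum>i<m. x i)\<^sup>2 - (\<Sum>i<m. (x i)\<^sup>2)"
proof (induction m)
  case 0
  then show ?case by (simp add: lag_poly_def complete_graph_def)
next
  case (Suc m)
  have "2 * lag_poly (complete_graph 2 (Suc m)) x
      = 2 * lag_poly (complete_graph 2 m) x + 2 * x m * lag_poly (complete_graph 1 m) x"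
    using lag_poly_complete_graph_Suc[of 1 m x] by (simp add: numeral_2_eq_2)
  then show ?case
    unfolding Suc lag_poly_complete_graph_1 by (simp add: power2_eq_square algebra_simps)
qed

lemma lag_poly_complete_graph_3:
  "6 * lag_poly (complete_graph 3 m) x
     = (\<Sum>i<m. x i) ^ 3 - 3 * (\<Sum>i<m. x i) * (\<Sum>i<m. (x i)\<^sup>2) + 2 * (\<Sum>i<m. x i ^ 3)"
proof (induction m)
  case 0
  then show ?case by (simp add: lag_poly_def complete_graph_def)
next
  case (Suc m)
  have "6 * lag_poly (complete_graph 3 (Suc m)) x
      = 6 * lag_poly (complete_graph 3 m) x + 3 * x m * (2 * lag_poly (complete_graph 2 m) x)"
    using lag_poly_complete_graph_Suc[of 2 m x] by (simp add: numeral_3_eq_3)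
  then show ?case
    unfolding Suc lag_poly_complete_graph_2 by (simp add: power2_eq_square power3_eq_cube algebra_simps)
qed

lemma cubic_le_tangent_line:
  fixes y c :: real
  assumes "0 \<le> y" "y \<le> 1" "c \<le> 1/4"
  shows "2 * y ^ 3 - 3 * y\<^sup>2 \<le> 2 * c ^ 3 - 3 * c\<^sup>2 + 6 * (c\<^sup>2 - c) * (y - c)"
proof -
  have "2 * c ^ 3 - 3 * c\<^sup>2 + 6 * (c\<^sup>2 - c) * (y - c) - (2 * y ^ 3 - 3 * y\<^sup>2)
      = (y - c)\<^sup>2 * (3 - 4 * c - 2 * y)"
    by (simp add: power2_eq_square power3_eq_cube algebra_simps)
  moreover have "(y - c)\<^sup>2 * (3 - 4 * c - 2 * y) \<ge> 0"
    using assms by simp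
  ultimately show ?thesis by linarith
qed

lemma arith_geom_mean_3:
  fixes a b c :: real
  assumes "0 \<le> a" "0 \<le> b" "0 \<le> c"
  shows "27 * (a * b * c) \<le> (a + b + c) ^ 3"
proof -
  have "2 * ((a + b + c) ^ 3 - 27 * (a * b * c))
      = (a + b + c) * ((a - b)\<^sup>2 + (b - c)\<^sup>2 + (c - a)\<^sup>2)
        + 6 * (a * (b - c)\<^sup>2 + b * (c - a)\<^sup>2 + c * (a - b)\<^sup>2)"
    by (simp add: power2_eq_square power3_eq_cube algebra_simps)
  moreover have "0 \<le> (a + b + c) * ((a - b)\<^sup>2 + (b - c)\<^sup>2 + (c - a)\<^sup>2)"
    using assms by simp
  moreover have "0 \<le> a * (b - c)\<^sup>2 + b * (c - a)\<^sup>2 + c * (a - b)\<^sup>2"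
    using assms by simp
  ultimately have "0 \<le> 2 * ((a + b + c) ^ 3 - 27 * (a * b * c))"
    by simp
  then show ?thesis by simp
qed

lemma power_sums_simplex_le:
  assumes "4 \<le> n" and "x \<in> simplex n"
  shows "2 * (\<Sum>i<n. x i ^ 3) - 3 * (\<Sum>i<n. (x i)\<^sup>2) \<le> (2 - 3 * real n) / real n ^ 2"
proof -
  have x: "\<And>i. i < n \<Longrightarrow> 0 \<le> x i \<and> x i \<le> 1" and sum: "(\<Sum>i<n. x i) = 1"
    using assms(2) by (simp_all add: simplex_def)
  define c :: real where "c = 1 / real n"
  have "c \<le> 1/4"
    using assms(1) unfolding c_def by (simp add: field_simps)
  then have "(\<Sum>i<n. 2 * x i ^ 3 - 3 * (x i)\<^sup>2)
      \<le> (\<Sum>i<n. 2 * c ^ 3 - 3 * c\<^sup>2 + 6 * (c\<^sup>2 - c) * (x i - c))"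
    by (intro sum_mono cubic_le_tangent_line) (simp_all add: x)
  also have "\<dots> = real n * (2 * c ^ 3 - 3 * c\<^sup>2) + 6 * (c\<^sup>2 - c) * ((\<Sum>i<n. x i) - real n * c)"
    by (simp add: sum.distrib sum_distrib_left[symmetric] sum_subtractf)
  also have "\<dots> = (2 - 3 * real n) / real n ^ 2"
    using sum assms(1) unfolding c_def by (simp add: field_simps power2_eq_square power3_eq_cube)
  finally show ?thesis
    by (simp add: sum_subtractf sum_distrib_left)
qed

lemma lag_poly_complete3_le:
  assumes "3 \<le> n" and "x \<in> simplex n"
  shows "lag_poly (complete3 n) x \<le> real (n choose 3) / real n ^ 3"
proof -
  have x: "\<And>i. i < n \<Longrightarrow> 0 \<le> x i \<and> x i \<le> 1" and sum: "(\<Sum>i<n. x i) = 1"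
    using assms(2) by (simp_all add: simplex_def)
  have "6 * lag_poly (complete3 n) x \<le> (real n - 1) * (real n - 2) / real n ^ 2"
  proof (cases "n = 3")
    case True
    have "6 * lag_poly (complete3 n) x = 6 * (x 0 * x 1 * x 2)"
      using lag_poly_complete_graph_3[of 3 x] True
      by (simp add: complete3_eq_complete_graph numeral_3_eq_3 numeral_2_eq_2
          power2_eq_square power3_eq_cube algebra_simps)
    moreover have "27 * (x 0 * x 1 * x 2) \<le> 1"
      using arith_geom_mean_3[of "x 0" "x 1" "x 2"] x[of 0] x[of 1] x[of 2] sum True
      by (simp add: numeral_3_eq_3 numeral_2_eq_2)
    ultimately show ?thesis
      using True by simp
  next
    case False
    have "6 * lag_poly (complete3 n) x = 1 - 3 * (\<Sum>i<n. (x i)\<^sup>2) + 2 * (\<Sum>i<n. x i ^ 3)"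
      using lag_poly_complete_graph_3[of n x] sum by (simp add: complete3_eq_complete_graph)
    moreover have "1 + (2 - 3 * real n) / real n ^ 2 = (real n - 1) * (real n - 2) / real n ^ 2"
      using assms(1) by (simp add: field_simps power2_eq_square)
    ultimately show ?thesis
      using power_sums_simplex_le[OF _ assms(2)] assms(1) False by fastforce
  qed
  also have "\<dots> = 6 * (real (n choose 3) / real n ^ 3)"
    using assms(1)
    by (simp add: binomial_gbinomial gbinomial_pochhammer' pochhammer_Suc_prod numeral_3_eq_3
        field_simps power2_eq_square power3_eq_cube)
  finally show ?thesis
    by simp
qed

lemma lag_poly_le_exp_1:
  assumes "E \<subseteq> Pow {..<n}" and "x \<in> simplex n"
  shows "lag_poly E x \<le> exp 1"
proof -
  have x: "\<And>i. i < n \<Longrightarrow> 0 \<le> x i" and sum: "(\<Sum>i<n. x i) = 1"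
    using assms(2) by (simp_all add: simplex_def)
  have "lag_poly E x \<le> (\<Sum>e\<in>Pow {..<n}. \<Prod>i\<in>e. x i)"
    unfolding lag_poly_def using assms(1) x by (intro sum_mono2) (auto intro!: prod_nonneg)
  also have "\<dots> = (\<Prod>i<n. x i + 1)"
    using prod_add[of "{..<n}" x "\<lambda>_. 1"] by simp
  also have "\<dots> \<le> (\<Prod>i<n. exp (x i))"
    using x by (intro prod_mono) (simp add: add.commute)
  also have "\<dots> = exp 1"
    using sum by (simp add: exp_sum[symmetric])
  finally show ?thesis .
qed

lemma lag_poly_le_lagrangian:
  assumes "E \<subseteq> Pow {..<n}" and "x \<in> simplex n"
  shows "lag_poly E x \<le> lagrangian n E"
  unfolding lagrangian_def
  using assms lag_poly_le_exp_1[OF assms(1)] by (intro cSup_upper) (auto simp: bdd_above_def)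

lemma lagrangian_le:
  assumes "1 \<le> n" and "\<And>x. x \<in> simplex n \<Longrightarrow> lag_poly E x \<le> B"
  shows "lagrangian n E \<le> B"
proof -
  have "(\<lambda>_. 1 / real n) \<in> simplex n"
    using assms(1) by (simp add: simplex_def)
  then show ?thesis
    unfolding lagrangian_def using assms(2) by (intro cSup_least) auto
qed

lemma lagrangian_complete3_le:
  assumes "3 \<le> n"
  shows "lagrangian n (complete3 n) \<le> real (n choose 3) / real n ^ 3"
  using assms by (intro lagrangian_le) (simp_all add: lag_poly_complete3_le)

lemma lagrangian_le_lagrangian_density:
  assumes "1 \<le> n" and "is_3graph n G" and "\<not> contains_copy n G t F"
  shows "6 * lagrangian n G \<le> lagrangian_density t F"
proof -
  have "lagrangian k E \<le> exp 1" if "is_3graph k E" "1 \<le> k" for k E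
  proof (rule lagrangian_le[OF that(2)])
    show "lag_poly E x \<le> exp 1" if "x \<in> simplex k" for x
      by (rule lag_poly_le_exp_1[OF _ that]) (use \<open>is_3graph k E\<close> in \<open>auto simp: is_3graph_def\<close>)
  qed
  then have "bdd_above {6 * lagrangian k E | k E. 1 \<le> k \<and> is_3graph k E \<and> \<not> contains_copy k E t F}"
    by (auto intro!: bdd_aboveI[of _ "6 * exp 1"])
  then show ?thesis
    unfolding lagrangian_density_def using assms by (intro cSup_upper) auto
qed

lemma not_contains_copy_if_card_less:
  assumes "is_3graph t F" and "finite G" and "card G < card F"
  shows "\<not> contains_copy n G t F"
proof
  assume "contains_copy n G t F"
  then obtain f where f: "inj_on f {..<t}" "\<forall>e\<in>F. f ` e \<in> G"
    unfolding contains_copy_def by blast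
  have "e \<subseteq> {..<t}" if "e \<in> F" for e
    using assms(1) that unfolding is_3graph_def by blast
  then have "inj_on ((`) f) F"
    using inj_on_image_eq_iff[OF f(1)] unfolding inj_on_def by (meson subsetD)
  then have "card F = card ((`) f ` F)"
    by (simp add: card_image)
  also have "\<dots> \<le> card G"
    using f(2) assms(2) by (intro card_mono) auto
  finally show False using assms(3) by simp
qed

definition twin_graph :: "nat \<Rightarrow> nat set set" where
  "twin_graph m = complete3 (Suc m) \<union> insert (Suc m) ` complete_graph 2 m \<union> {{0, m, Suc m}}"

definition twin_weight :: "nat \<Rightarrow> nat \<Rightarrow> real" where
  "twin_weight m i =
     (if i < m then 1 else if i \<le> Suc m then 1/2 else 0) / real (Suc m)"

lemma is_3graph_twin_graph:
  assumes "0 < m"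
  shows "is_3graph (Suc (Suc m)) (twin_graph m)"
  unfolding is_3graph_def twin_graph_def
proof (intro ballI)
  fix e assume "e \<in> complete3 (Suc m) \<union> insert (Suc m) ` complete_graph 2 m \<union> {{0, m, Suc m}}"
  then consider "e \<in> complete3 (Suc m)" | p where "p \<in> complete_graph 2 m" "e = insert (Suc m) p"
    | "e = {0, m, Suc m}"
    by blast
  then show "e \<subseteq> {..<Suc (Suc m)} \<and> card e = 3"
  proof cases
    case (2 p)
    then have "finite p" "Suc m \<notin> p"
      unfolding complete_graph_def by (auto intro: finite_subset)
    with 2 show ?thesis
      unfolding complete_graph_def by auto
  qed (use assms in \<open>auto simp: complete3_def\<close>)
qed

lemma card_twin_graph_le: "card (twin_graph m) \<le> (Suc m choose 3) + (m choose 2) + 1"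
proof -
  have "card (twin_graph m) \<le> card (complete3 (Suc m) \<union> insert (Suc m) ` complete_graph 2 m) + 1"
    unfolding twin_graph_def using card_Un_le[of _ "{{0, m, Suc m}}"] by simp
  also have "\<dots> \<le> card (complete3 (Suc m)) + card (insert (Suc m) ` complete_graph 2 m) + 1"
    using card_Un_le by simp
  also have "card (insert (Suc m) ` complete_graph 2 m) \<le> m choose 2"
    using card_image_le[OF finite_complete_graph] card_complete_graph by metis
  finally show ?thesis
    by (simp add: complete3_eq_complete_graph card_complete_graph)
qed

lemma twin_weight_in_simplex: "twin_weight m \<in> simplex (Suc (Suc m))"
proof -
  have "(\<Sum>i<Suc (Suc m). twin_weight m i) = (real m + 1/2 + 1/2) / real (Suc m)"
    by (simp add: twin_weight_def sum_divide_distrib[symmetric])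
  then show ?thesis
    unfolding simplex_def by (auto simp: twin_weight_def)
qed

lemma lag_poly_twin_graph:
  assumes "0 < m"
  shows "lag_poly (twin_graph m) (twin_weight m) = (real (Suc m choose 3) + 1/4) / real (Suc m) ^ 3"
proof -
  define w where "w = twin_weight m"
  define c :: real where "c = 1 / real (Suc m)"
  have w: "\<And>i. i < m \<Longrightarrow> w i = c" "w m = c / 2" "w (Suc m) = c / 2"
    by (simp_all add: w_def c_def twin_weight_def)
  have pairs: "lag_poly (complete_graph 2 m) w = real (m choose 2) * c\<^sup>2"
    using w(1) by (rule lag_poly_complete_graph_const)
  have triples: "lag_poly (complete_graph 3 m) w = real (m choose 3) * c ^ 3"
    using w(1) by (rule lag_poly_complete_graph_const)
  have "lag_poly (complete3 (Suc m)) w = real (m choose 3) * c ^ 3 + c / 2 * (real (m choose 2) * c\<^sup>2)"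
    using lag_poly_complete_graph_Suc[of 2 m w] triples pairs w(2)
    by (simp add: complete3_eq_complete_graph numeral_3_eq_3)
  moreover have "lag_poly (insert (Suc m) ` complete_graph 2 m) w = c / 2 * (real (m choose 2) * c\<^sup>2)"
    using lag_poly_insert_image[of m "Suc m" 2 w] pairs w(3) by simp
  moreover have "lag_poly {{0, m, Suc m}} w = c * (c / 2) * (c / 2)"
    using assms by (simp add: lag_poly_def w(1)[OF assms] w(2,3))
  moreover have "lag_poly (twin_graph m) w = lag_poly (complete3 (Suc m)) w
      + lag_poly (insert (Suc m) ` complete_graph 2 m) w + lag_poly {{0, m, Suc m}} w"
  proof -
    have "complete3 (Suc m) \<inter> insert (Suc m) ` complete_graph 2 m = {}"
      unfolding complete3_def by auto
    moreover have "{0, m, Suc m} \<notin> insert (Suc m) ` complete_graph 2 m"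
      unfolding complete_graph_def by auto
    moreover have "{0, m, Suc m} \<notin> complete3 (Suc m)"
      unfolding complete3_def by auto
    ultimately show ?thesis
      unfolding twin_graph_def
      by (simp add: lag_poly_Un finite_complete_graph complete3_eq_complete_graph del: Un_insert_right)
  qed
  moreover have "real (Suc m choose 3) = real (m choose 3) + real (m choose 2)"
    by (simp add: numeral_3_eq_3 numeral_2_eq_2)
  ultimately have "lag_poly (twin_graph m) w = (real (Suc m choose 3) + 1/4) * c ^ 3"
    by (simp add: algebra_simps power2_eq_square power3_eq_cube)
  then show ?thesis
    by (simp add: w_def c_def power_divide)
qed

theorem mainTheorem7:
  fixes t :: nat and H :: "nat set set"
  assumes "t \<ge> 4"
    and "is_3graph t H"
    and "card H \<ge> (t - 1 choose 3) + (t - 2 choose 2) + 2"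
  shows "\<not> lambda_perfect t H"
proof -
  define m where "m = t - 2"
  have t: "t = Suc (Suc m)" "t - 1 = Suc m" "t - 2 = m" and m: "2 \<le> m"
    using assms(1) by (simp_all add: m_def)
  have G: "is_3graph t (twin_graph m)"
    using is_3graph_twin_graph m t by simp
  have "finite (twin_graph m)"
    by (simp add: twin_graph_def complete3_eq_complete_graph finite_complete_graph)
  then have free: "\<not> contains_copy t (twin_graph m) t H"
    using card_twin_graph_le[of m] assms(2,3) t
    by (intro not_contains_copy_if_card_less) simp_all
  have "6 * lagrangian (t - 1) (complete3 (t - 1)) \<le> 6 * (real (Suc m choose 3) / real (Suc m) ^ 3)"
    using lagrangian_complete3_le[of "Suc m"] m t(2) by simp
  also have "\<dots> < 6 * lag_poly (twin_graph m) (twin_weight m)"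
    using lag_poly_twin_graph m by (simp add: divide_strict_right_mono)
  also have "\<dots> \<le> 6 * lagrangian t (twin_graph m)"
    using G twin_weight_in_simplex[of m] t(1)
    by (simp add: lag_poly_le_lagrangian is_3graph_def subset_eq)
  also have "\<dots> \<le> lagrangian_density t H"
    using G free t(1) by (intro lagrangian_le_lagrangian_density) simp_all
  finally show ?thesis
    unfolding lambda_perfect_def by simp
qed

end
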